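(* Let $N$ be a finite set and let $s:2^N\to\mathbb{R}$ be a set function whose type-4 Fourier support is $\mathrm{supp}(\widehat{s})=\{B\subseteq N:\widehat{s}^{(4)}_B\neq 0\}=\{B_1,\dots,B_k\}=\mathcal{B}$ (with $B_1,\dots,B_k$ distinct). Let $\mathcal{A}=\{N\setminus B_1,\dots,N\setminus B_k\}$. Let $F^{-1}$ denote the $2^{|N|}\times 2^{|N|}$ matrix $[\mathbb{1}_{A\cap B=\emptyset}]_{A,B\subseteq N}$ (row index $A$, column index $B$), and let $T=(F^{-1})_{\mathcal{A}\mathcal{B}}$ be its submatrix with rows in $\mathcal{A}$ and columns in $\mathcal{B}$. Then $T$ is invertible and $$\mathbf{s}=\big((F^{-1})_{2^N\mathcal{B}}\,T^{-1}\big)\,\mathbf{s}_{\mathcal{A}},$$ where $\mathbf{s}=(s_A)_{A\subseteq N}$, $\mathbf{s}_{\mathcal{A}}=(s_A)_{A\in\mathcal{A}}$, and $(F^{-1})_{2^N\mathcal{B}}$ is the submatrix of $F^{-1}$ consisting of the columns indexed by $\mathcal{B}$.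
   Context: The type-4 discrete set Fourier transform of $s$ is $\widehat{s}^{(4)}_B=\sum_{A\subseteq N,\,A\cup B=N}(-1)^{|A\cap B|}s_A$ for $B\subseteq N$; its inverse is $s_A=\sum_{B\subseteq N,\,A\cap B=\emptyset}\widehat{s}^{(4)}_B$, i.e., $F^{-1}=[\mathbb{1}_{A\cap B=\emptyset}]_{A,B}$ is the inverse of the type-4 transform matrix. Here $\mathbb{1}_P$ is $1$ if $P$ holds and $0$ otherwise. *)

theory Defs
  imports "HOL-Analysis.Analysis"
begin

text \<open>Set functions on subsets of a finite ground set N are modelled as
  functions s :: 'a set \<Rightarrow> real (only values on subsets of N matter).
  Matrices indexed by families of subsets are modelled as functions
  'a set \<Rightarrow> 'a set \<Rightarrow> real (row index first), restricted to
  explicit finite index families.\<close>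

definition fourier4 :: "'a set \<Rightarrow> ('a set \<Rightarrow> real) \<Rightarrow> 'a set \<Rightarrow> real" where
  "fourier4 N s B = (\<Sum>A\<in>{A. A \<subseteq> N \<and> A \<union> B = N}. (-1) ^ card (A \<inter> B) * s A)"

definition fourier4_supp :: "'a set \<Rightarrow> ('a set \<Rightarrow> real) \<Rightarrow> 'a set set" where
  "fourier4_supp N s = {B. B \<subseteq> N \<and> fourier4 N s B \<noteq> 0}"

definition Finv :: "'a set \<Rightarrow> 'a set \<Rightarrow> real" where
  "Finv A B = (if A \<inter> B = {} then 1 else 0)"

definition is_inverse_on :: "'i set \<Rightarrow> 'j set \<Rightarrow> ('i \<Rightarrow> 'j \<Rightarrow> real) \<Rightarrow> ('j \<Rightarrow> 'i \<Rightarrow> real) \<Rightarrow> bool" where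
  "is_inverse_on R C T Ti \<longleftrightarrow>
     (\<forall>a\<in>R. \<forall>a'\<in>R. (\<Sum>b\<in>C. T a b * Ti b a') = (if a = a' then 1 else 0)) \<and>
     (\<forall>b\<in>C. \<forall>b'\<in>C. (\<Sum>a\<in>R. Ti b a * T a b') = (if b = b' then 1 else 0))"

end

theory Submission
  imports Defs
begin

(* Write s^ for the type-4 transform.  Substituting A = N - D turns s^_B into the alternating sum
   (-1)^|B| * sum_{D <= B} (-1)^|D| s(N - D), so Moebius inversion on the Boolean lattice gives
   s_X = sum_{B <= N - X} s^_B, i.e. s = F^{-1} s^, and the sum may be restricted to any family
   containing the support.  For A = N - B' the entry F^{-1}_{A,B} is [B <= B'], so T is the
   transposed zeta matrix of the finite poset (supp, <=) with rows reindexed by complementation,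
   and the Moebius function of that poset inverts it.  Any inverse of T recovers s^ on the
   support from the samples s_A, A in the complements, and s = F^{-1} s^ reconstructs s. *)

(* Left and right inverses of the zeta matrix [x <= y] on a finite subset P of an order; the
   finiteness guard only serves termination. *)

function moebius_left :: "'a::order set \<Rightarrow> 'a \<Rightarrow> 'a \<Rightarrow> 'b::ring_1" where
  "moebius_left P x y =
     (if x = y then 1
      else if finite P then - (\<Sum>c | c \<in> P \<and> x \<le> c \<and> c < y. moebius_left P x c)
      else 0)"
  by auto
termination
proof (relation "Wellfounded.measure (\<lambda>(P, x, y). card {d \<in> P. d < y})")
  fix P :: "'a set" and x y c :: 'a
  assume "finite P" and "c \<in> {c. c \<in> P \<and> x \<le> c \<and> c < y}"
  then show "((P, x, c), (P, x, y)) \<in> Wellfounded.measure (\<lambda>(P, x, y). card {d \<in> P. d < y})"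
    by (auto intro!: psubset_card_mono)
qed auto

function moebius_right :: "'a::order set \<Rightarrow> 'a \<Rightarrow> 'a \<Rightarrow> 'b::ring_1" where
  "moebius_right P x y =
     (if x = y then 1
      else if finite P then - (\<Sum>c | c \<in> P \<and> x < c \<and> c \<le> y. moebius_right P c y)
      else 0)"
  by auto
termination
proof (relation "Wellfounded.measure (\<lambda>(P, x, y). card {d \<in> P. x < d})")
  fix P :: "'a set" and x y c :: 'a
  assume "finite P" and "c \<in> {c. c \<in> P \<and> x < c \<and> c \<le> y}"
  then show "((P, c, y), (P, x, y)) \<in> Wellfounded.measure (\<lambda>(P, x, y). card {d \<in> P. x < d})"
    by (auto intro!: psubset_card_mono)
qed auto

declare moebius_left.simps [simp del] moebius_right.simps [simp del]

lemma moebius_left_eq_0: "\<not> x \<le> y \<Longrightarrow> moebius_left P x y = 0"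
  by (subst moebius_left.simps) (auto dest: order_trans intro!: sum.neutral)

lemma moebius_right_eq_0: "\<not> x \<le> y \<Longrightarrow> moebius_right P x y = 0"
  by (subst moebius_right.simps) (auto dest: order_trans intro!: sum.neutral)

lemma moebius_left_interval_sum:
  assumes "finite P" "y \<in> P" "x \<le> y"
  shows "(\<Sum>c | c \<in> P \<and> x \<le> c \<and> c \<le> y. moebius_left P x c) = of_bool (x = y)"
proof (cases "x = y")
  case True
  then have "{c. c \<in> P \<and> x \<le> c \<and> c \<le> y} = {y}"
    using \<open>y \<in> P\<close> by auto
  with True show ?thesis
    by (simp add: moebius_left.simps)
next
  case False
  have "{c. c \<in> P \<and> x \<le> c \<and> c \<le> y} = insert y {c. c \<in> P \<and> x \<le> c \<and> c < y}"
    using assms by auto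
  with False \<open>finite P\<close> show ?thesis
    by (simp add: moebius_left.simps[of P x y])
qed

lemma moebius_left_zeta:
  assumes "finite P" "x \<in> P" "y \<in> P"
  shows "(\<Sum>c\<in>P. moebius_left P x c * of_bool (c \<le> y)) = of_bool (x = y)"
proof -
  have "(\<Sum>c\<in>P. moebius_left P x c * of_bool (c \<le> y)) = (\<Sum>c | c \<in> P \<and> x \<le> c \<and> c \<le> y. moebius_left P x c)"
    unfolding sum.inter_filter[OF \<open>finite P\<close>] by (intro sum.cong) (auto simp: moebius_left_eq_0)
  also have "\<dots> = of_bool (x = y)"
  proof (cases "x \<le> y")
    case True
    with assms show ?thesis
      by (intro moebius_left_interval_sum)
  next
    case False
    then show ?thesis
      by (auto intro!: sum.neutral dest: order_trans)
  qed
  finally show ?thesis .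
qed

lemma moebius_right_interval_sum:
  assumes "finite P" "x \<in> P" "x \<le> y"
  shows "(\<Sum>c | c \<in> P \<and> x \<le> c \<and> c \<le> y. moebius_right P c y) = of_bool (x = y)"
proof (cases "x = y")
  case True
  then have "{c. c \<in> P \<and> x \<le> c \<and> c \<le> y} = {x}"
    using \<open>x \<in> P\<close> by auto
  with True show ?thesis
    by (simp add: moebius_right.simps)
next
  case False
  have "{c. c \<in> P \<and> x \<le> c \<and> c \<le> y} = insert x {c. c \<in> P \<and> x < c \<and> c \<le> y}"
    using assms by auto
  with False \<open>finite P\<close> show ?thesis
    by (simp add: moebius_right.simps[of P x y])
qed

lemma zeta_moebius_right:
  assumes "finite P" "x \<in> P" "y \<in> P"
  shows "(\<Sum>c\<in>P. of_bool (x \<le> c) * moebius_right P c y) = of_bool (x = y)"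
proof -
  have "(\<Sum>c\<in>P. of_bool (x \<le> c) * moebius_right P c y) = (\<Sum>c | c \<in> P \<and> x \<le> c \<and> c \<le> y. moebius_right P c y)"
    unfolding sum.inter_filter[OF \<open>finite P\<close>] by (intro sum.cong) (auto simp: moebius_right_eq_0)
  also have "\<dots> = of_bool (x = y)"
  proof (cases "x \<le> y")
    case True
    with assms show ?thesis
      by (intro moebius_right_interval_sum)
  next
    case False
    then show ?thesis
      by (auto intro!: sum.neutral dest: order_trans)
  qed
  finally show ?thesis .
qed

lemma left_inverse_eq_right_inverse:
  fixes L Z R :: "'a \<Rightarrow> 'a \<Rightarrow> 'b::semiring_1"
  assumes "finite P"
    and left: "\<And>x y. x \<in> P \<Longrightarrow> y \<in> P \<Longrightarrow> (\<Sum>c\<in>P. L x c * Z c y) = of_bool (x = y)"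
    and right: "\<And>x y. x \<in> P \<Longrightarrow> y \<in> P \<Longrightarrow> (\<Sum>c\<in>P. Z x c * R c y) = of_bool (x = y)"
    and "x \<in> P" "y \<in> P"
  shows "L x y = R x y"
proof -
  have "L x y = (\<Sum>c\<in>P. L x c * of_bool (c = y))"
    using \<open>finite P\<close> \<open>y \<in> P\<close> by simp
  also have "\<dots> = (\<Sum>c\<in>P. L x c * (\<Sum>d\<in>P. Z c d * R d y))"
    using right \<open>y \<in> P\<close> by simp
  also have "\<dots> = (\<Sum>d\<in>P. (\<Sum>c\<in>P. L x c * Z c d) * R d y)"
    by (simp add: sum_distrib_left sum_distrib_right mult.assoc) (rule sum.swap)
  also have "\<dots> = (\<Sum>d\<in>P. of_bool (x = d) * R d y)"
    using left \<open>x \<in> P\<close> by simp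
  also have "\<dots> = R x y"
    using \<open>finite P\<close> \<open>x \<in> P\<close> by simp
  finally show ?thesis .
qed

lemma moebius_left_eq_right:
  assumes "finite P" "x \<in> P" "y \<in> P"
  shows "moebius_left P x y = moebius_right P x y"
  using moebius_left_zeta[OF \<open>finite P\<close>] zeta_moebius_right[OF \<open>finite P\<close>]
  by (rule left_inverse_eq_right_inverse[OF \<open>finite P\<close> _ _ \<open>x \<in> P\<close> \<open>y \<in> P\<close>])

lemma zeta_moebius_left:
  assumes "finite P" "x \<in> P" "y \<in> P"
  shows "(\<Sum>c\<in>P. of_bool (x \<le> c) * moebius_left P c y) = of_bool (x = y)"
proof -
  have "(\<Sum>c\<in>P. of_bool (x \<le> c) * moebius_left P c y) = (\<Sum>c\<in>P. of_bool (x \<le> c) * moebius_right P c y)"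
    using assms by (intro sum.cong) (simp_all add: moebius_left_eq_right)
  also have "\<dots> = of_bool (x = y)"
    using assms by (rule zeta_moebius_right)
  finally show ?thesis .
qed

lemma is_inverse_on_zeta_moebius:
  assumes "finite P"
  shows "is_inverse_on P P (\<lambda>x y. of_bool (x \<le> y)) (moebius_left P)"
  unfolding is_inverse_on_def of_bool_def[symmetric]
  using assms by (intro conjI ballI zeta_moebius_left moebius_left_zeta)

lemma is_inverse_on_cong:
  assumes "\<And>a b. a \<in> R \<Longrightarrow> b \<in> C \<Longrightarrow> T a b = T' a b"
  shows "is_inverse_on R C T Ti \<longleftrightarrow> is_inverse_on R C T' Ti"
  using assms by (simp add: is_inverse_on_def cong: sum.cong)

lemma is_inverse_on_transpose:
  assumes "is_inverse_on R C T Ti"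
  shows "is_inverse_on C R (\<lambda>c r. T r c) (\<lambda>r c. Ti c r)"
  unfolding is_inverse_on_def
proof (intro conjI ballI)
  fix c c' assume "c \<in> C" "c' \<in> C"
  then have "(\<Sum>r\<in>R. Ti c' r * T r c) = (if c' = c then 1 else 0)"
    using assms by (simp add: is_inverse_on_def)
  then show "(\<Sum>r\<in>R. T r c * Ti c' r) = (if c = c' then 1 else 0)"
    by (simp add: mult.commute eq_commute)
next
  fix r r' assume "r \<in> R" "r' \<in> R"
  then have "(\<Sum>c\<in>C. T r' c * Ti c r) = (if r' = r then 1 else 0)"
    using assms by (simp add: is_inverse_on_def)
  then show "(\<Sum>c\<in>C. Ti c r * T r' c) = (if r = r' then 1 else 0)"
    by (simp add: mult.commute eq_commute)
qed

lemma is_inverse_on_reindex_rows: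
  assumes "is_inverse_on R C T Ti" and f: "bij_betw f R' R"
  shows "is_inverse_on R' C (\<lambda>a b. T (f a) b) (\<lambda>b a. Ti b (f a))"
proof -
  have "(\<Sum>a\<in>R'. Ti b (f a) * T (f a) b') = (\<Sum>r\<in>R. Ti b r * T r b')" for b b'
    using sum.reindex_bij_betw[OF f, of "\<lambda>r. Ti b r * T r b'"] .
  moreover have "f a = f a' \<longleftrightarrow> a = a'" if "a \<in> R'" "a' \<in> R'" for a a'
    using f that by (auto simp: bij_betw_def dest: inj_onD)
  ultimately show ?thesis
    using assms bij_betwE[OF f] by (simp add: is_inverse_on_def)
qed

lemma is_inverse_on_solve:
  assumes "is_inverse_on R C T Ti" "finite C" "c \<in> C"
    and "\<And>a. a \<in> R \<Longrightarrow> v a = (\<Sum>b\<in>C. T a b * h b)"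
  shows "(\<Sum>a\<in>R. Ti c a * v a) = h c"
proof -
  have "(\<Sum>a\<in>R. Ti c a * v a) = (\<Sum>a\<in>R. \<Sum>b\<in>C. Ti c a * T a b * h b)"
    using assms(4) by (simp add: sum_distrib_left mult.assoc)
  also have "\<dots> = (\<Sum>b\<in>C. (\<Sum>a\<in>R. Ti c a * T a b) * h b)"
    by (subst sum.swap) (simp add: sum_distrib_right)
  also have "\<dots> = (\<Sum>b\<in>C. if c = b then h b else 0)"
    using assms(1,3) by (intro sum.cong) (simp_all add: is_inverse_on_def)
  also have "\<dots> = h c"
    using assms(2,3) by simp
  finally show ?thesis .
qed

lemma Finv_eq_of_bool: "Finv A B = of_bool (A \<inter> B = {})"
  by (simp add: Finv_def)

lemma fourier4_supp_subset_Pow: "fourier4_supp N s \<subseteq> Pow N"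
  by (auto simp: fourier4_supp_def)

lemma finite_fourier4_supp: "finite N \<Longrightarrow> finite (fourier4_supp N s)"
  by (rule finite_subset[OF fourier4_supp_subset_Pow]) simp

lemma fourier4_eq_alternating_sum:
  assumes "finite N" "B \<subseteq> N"
  shows "fourier4 N s B = (-1) ^ card B * (\<Sum>D\<in>Pow B. (-1) ^ card D * s (N - D))"
proof -
  have "{A. A \<subseteq> N \<and> A \<union> B = N} = (\<lambda>D. N - D) ` Pow B"
    using assms(2) by (auto simp: image_def)
  moreover have "inj_on (\<lambda>D. N - D) (Pow B)"
    using assms(2) by (auto intro!: inj_onI)
  moreover have "(-1) ^ card ((N - D) \<inter> B) = (-1) ^ card B * ((-1) ^ card D :: real)" if "D \<subseteq> B" for D
  proof -
    have "(N - D) \<inter> B = B - D"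
      using assms(2) by auto
    moreover have "finite B"
      using assms finite_subset by blast
    ultimately show ?thesis
      using that by (simp add: card_Diff_subset card_mono finite_subset
          flip: neg_one_power_add_eq_neg_one_power_diff power_add)
  qed
  ultimately show ?thesis
    by (simp add: fourier4_def sum.reindex sum_distrib_left mult.assoc)
qed

lemma fourier4_inversion:
  assumes "finite N" "X \<subseteq> N"
  shows "s X = (\<Sum>B\<in>Pow (N - X). fourier4 N s B)"
proof -
  have "s (N - (N - X)) =
      (\<Sum>B\<in>Pow (N - X). (-1) ^ card B * (\<Sum>D\<in>Pow B. (-1) ^ card D * s (N - D)))"
    by (rule inclusion_exclusion_symmetric) (use assms(1) in simp_all)
  also have "\<dots> = (\<Sum>B\<in>Pow (N - X). fourier4 N s B)"
    using assms(1) by (intro sum.cong refl) (auto intro!: fourier4_eq_alternating_sum[symmetric])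
  finally show ?thesis
    using assms(2) by (simp add: double_diff)
qed

lemma fourier4_inversion_on:
  assumes "finite N" "X \<subseteq> N" "fourier4_supp N s \<subseteq> \<B>" "\<B> \<subseteq> Pow N"
  shows "s X = (\<Sum>B\<in>\<B>. Finv X B * fourier4 N s B)"
proof -
  have "(\<Sum>B\<in>Pow N. Finv X B * fourier4 N s B) = (\<Sum>B\<in>Pow N \<inter> {B. X \<inter> B = {}}. fourier4 N s B)"
    using assms(1) by (simp add: Finv_eq_of_bool)
  also have "Pow N \<inter> {B. X \<inter> B = {}} = Pow (N - X)"
    by auto
  finally have "(\<Sum>B\<in>Pow (N - X). fourier4 N s B) = (\<Sum>B\<in>Pow N. Finv X B * fourier4 N s B)"
    by simp
  also have "\<dots> = (\<Sum>B\<in>\<B>. Finv X B * fourier4 N s B)"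
    using assms by (intro sum.mono_neutral_right) (auto simp: fourier4_supp_def)
  finally show ?thesis
    using fourier4_inversion[OF assms(1,2)] by simp
qed

lemma fourier4_sampling:
  assumes "finite N" "X \<subseteq> N" "fourier4_supp N s \<subseteq> \<B>" "\<B> \<subseteq> Pow N" "\<A> \<subseteq> Pow N"
    and Ti: "is_inverse_on \<A> \<B> Finv Ti"
  shows "s X = (\<Sum>A\<in>\<A>. (\<Sum>B\<in>\<B>. Finv X B * Ti B A) * s A)"
proof -
  have "finite \<B>"
    by (rule finite_subset[OF assms(4)]) (simp add: assms(1))
  have "s A = (\<Sum>B\<in>\<B>. Finv A B * fourier4 N s B)" if "A \<in> \<A>" for A
    using that assms(1,3-5) by (intro fourier4_inversion_on) auto
  then have coeff: "fourier4 N s B = (\<Sum>A\<in>\<A>. Ti B A * s A)" if "B \<in> \<B>" for B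
    using is_inverse_on_solve[OF Ti \<open>finite \<B>\<close> that] by simp
  have "s X = (\<Sum>B\<in>\<B>. Finv X B * fourier4 N s B)"
    using assms(1-4) by (rule fourier4_inversion_on)
  also have "\<dots> = (\<Sum>B\<in>\<B>. \<Sum>A\<in>\<A>. Finv X B * Ti B A * s A)"
    using coeff by (simp add: sum_distrib_left mult.assoc)
  also have "\<dots> = (\<Sum>A\<in>\<A>. (\<Sum>B\<in>\<B>. Finv X B * Ti B A) * s A)"
    by (subst sum.swap) (simp add: sum_distrib_right)
  finally show ?thesis .
qed

lemma is_inverse_on_Finv_complements:
  assumes "finite \<B>" "\<B> \<subseteq> Pow N"
  shows "is_inverse_on ((\<lambda>B. N - B) ` \<B>) \<B> Finv (\<lambda>B A. moebius_left \<B> (N - A) B)"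
proof -
  have "bij_betw (\<lambda>A. N - A) ((\<lambda>B. N - B) ` \<B>) \<B>"
    using assms(2) by (intro bij_betw_byWitness[where f' = "\<lambda>B. N - B"]) (auto simp: Diff_Diff_Int Int_absorb1)
  from is_inverse_on_reindex_rows[OF is_inverse_on_transpose[OF is_inverse_on_zeta_moebius] this]
  have "is_inverse_on ((\<lambda>B. N - B) ` \<B>) \<B> (\<lambda>A B. of_bool (B \<subseteq> N - A)) (\<lambda>B A. moebius_left \<B> (N - A) B)"
    using assms(1) by simp
  moreover have "Finv A B = of_bool (B \<subseteq> N - A)" if "B \<in> \<B>" for A B
    using assms(2) that by (auto simp: Finv_def)
  ultimately show ?thesis
    using is_inverse_on_cong[where T = Finv and T' = "\<lambda>A B. of_bool (B \<subseteq> N - A)"] by blast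
qed

theorem theorem4:
  fixes N :: "'a set" and s :: "'a set \<Rightarrow> real"
  assumes "finite N"
  defines "\<B> \<equiv> fourier4_supp N s"
      and "\<A> \<equiv> (\<lambda>B. N - B) ` fourier4_supp N s"
      and "T \<equiv> (\<lambda>A B. Finv A B)"
  shows "(\<exists>Ti. is_inverse_on \<A> \<B> T Ti) \<and>
         (\<forall>Ti. is_inverse_on \<A> \<B> T Ti \<longrightarrow>
            (\<forall>X. X \<subseteq> N \<longrightarrow>
               s X = (\<Sum>A\<in>\<A>. (\<Sum>B\<in>\<B>. Finv X B * Ti B A) * s A)))"
proof -
  have "finite \<B>" "fourier4_supp N s \<subseteq> \<B>" "\<B> \<subseteq> Pow N" "\<A> \<subseteq> Pow N"
    unfolding \<A>_def \<B>_def using finite_fourier4_supp[OF assms(1)] by (auto simp: fourier4_supp_def)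
  then have "is_inverse_on \<A> \<B> T (\<lambda>B A. moebius_left \<B> (N - A) B)"
    unfolding \<A>_def T_def \<B>_def by (intro is_inverse_on_Finv_complements)
  moreover have "s X = (\<Sum>A\<in>\<A>. (\<Sum>B\<in>\<B>. Finv X B * Ti B A) * s A)"
    if "is_inverse_on \<A> \<B> T Ti" "X \<subseteq> N" for Ti X
    using assms(1) \<open>X \<subseteq> N\<close> \<open>fourier4_supp N s \<subseteq> \<B>\<close> \<open>\<B> \<subseteq> Pow N\<close> \<open>\<A> \<subseteq> Pow N\<close>
      that(1)[unfolded T_def]
    by (rule fourier4_sampling)
  ultimately show ?thesis
    by blast
qed

end
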